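(* For all closed terms $t_0,t_1$, if $t_0\approx_{\emptyset}t_1$ then $t_0\approx^p_{\emptyset}t_1$.
   Context: Terms of $\lambda_S$: $t ::= x \mid \lambda x.t \mid t\,t \mid \mathcal{S}k.t \mid \langle t\rangle$ (shift binds $k$; $\langle\cdot\rangle$ reset), up to $\alpha$-conversion. Values $v::=\lambda x.t$. Pure contexts $E ::= \Box \mid v\,E \mid E\,t$; evaluation contexts $F ::= \Box \mid v\,F \mid F\,t \mid \langle F\rangle$. Reduction: $F[(\lambda x.t)v]\to F[t\{v/x\}]$; $F[\langle E[\mathcal Sk.t]\rangle]\to F[\langle t\{\lambda x.\langle E[x]\rangle/k\}\rangle]$ ($x\notin\mathrm{fv}(E)$); $F[\langle v\rangle]\to F[v]$; $\to^*$ reflexive-transitive closure. Stuck: not a value and irreducible; normal form: value or stuck. Program: term $\langle t\rangle$ (ranged over by $p$). Closures: for $R$ a relation on closed terms, $\widetilde R$ is the smallest relation containing $R$, all $(x,x)$, closed under all term constructors, restricted to closed terms; $\widehat R$ is the smallest relation on closed evaluation contexts with $\Box\widehat R\Box$, $v_0F_0\widehat Rv_1F_1$ if $F_0\widehat RF_1,v_0\widetilde Rv_1$; $F_0t_0\widehat RF_1t_1$ if $F_0\widehat RF_1,t_0\widetilde Rt_1$; $\langle F_0\rangle\widehat R\langle F_1\rangle$ if $F_0\widehat RF_1$. An environmental relation $\mathcal X$ is a set of environments (relations on closed terms) and triples $(\mathcal E,t_0,t_1)$ with $t_0,t_1$ closed, written $t_0\mathcal X_{\mathcal E}t_1$. Relaxed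 bisimilarity $\approx$: environments relate closed values with values and closed stuck terms with stuck terms; $\mathcal X$ is an environmental bisimulation if (1) whenever $t_0\mathcal X_{\mathcal E}t_1$: (a) $t_0\to t_0'$ implies $t_1\to^*t_1'$, $t_0'\mathcal X_{\mathcal E}t_1'$; (b) $t_0=v_0$ implies $t_1\to^*v_1$, $\mathcal E\cup\{(v_0,v_1)\}\in\mathcal X$; (c) $t_0$ stuck implies $t_1\to^*t_1'$ stuck, $\mathcal E\cup\{(t_0,t_1')\}\in\mathcal X$; (d) symmetric conditions; (2) whenever $\mathcal E\in\mathcal X$: (a) $(\lambda x.t_0)\mathcal E(\lambda x.t_1)$, $v_0\widetilde{\mathcal E}v_1$ imply $t_0\{v_0/x\}\mathcal X_{\mathcal E}t_1\{v_1/x\}$; (b) $E_0[\mathcal Sk.t_0]\mathcal EE_1[\mathcal Sk.t_1]$, pure $E_0'\widehat{\mathcal E}E_1'$ imply $\langle t_0\{\lambda x.\langle E_0'[E_0[x]]\rangle/k\}\rangle\mathcal X_{\mathcal E}\langle t_1\{\lambda x.\langle E_1'[E_1[x]]\rangle/k\}\rangle$ ($x$ fresh). $\approx$ is the largest; $t_0\approx_\emptyset t_1$ means $(\emptyset,t_0,t_1)\in\approx$. Program bisimilarity $\approx^p$: environments relate closed values only; $\mathcal X$ is an environmental bisimulation for programs if (1) if $t_0\mathcal X_{\mathcal E}t_1$ and $t_0,t_1$ are not both programs then for all pure $E_0\widehat{\mathcal E}E_1$, $\langle E_0[t_0]\rangle\mathcal X_{\mathcal E}\langle E_1[t_1]\rangle$;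 (2) if $p_0\mathcal X_{\mathcal E}p_1$: (a) $p_0\to p_0'$ (program) implies $p_1\to^*p_1'$ (program), $p_0'\mathcal X_{\mathcal E}p_1'$; (b) $p_0\to v_0$ implies $p_1\to^*v_1$, $\{(v_0,v_1)\}\cup\mathcal E\in\mathcal X$; (c) symmetric conditions; (3) for $\mathcal E\in\mathcal X$, $(\lambda x.t_0)\mathcal E(\lambda x.t_1)$, $v_0\widetilde{\mathcal E}v_1$ imply $t_0\{v_0/x\}\mathcal X_{\mathcal E}t_1\{v_1/x\}$. $\approx^p$ is the largest; $t_0\approx^p_\emptyset t_1$ means $(\emptyset,t_0,t_1)\in\approx^p$. *)

theory Defs
  imports Main
begin

section \<open>Terms of lambda_S (de Bruijn indices, so terms are up to alpha-conversion)\<close>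

datatype tm = Var nat | Lam tm | App tm tm | Shift tm | Reset tm
  (* Shift t: the shift operator S k. t, with k bound as index 0 in t *)

fun closed_at :: "nat \<Rightarrow> tm \<Rightarrow> bool" where
  "closed_at n (Var m) = (m < n)"
| "closed_at n (Lam t) = closed_at (Suc n) t"
| "closed_at n (App t u) = (closed_at n t \<and> closed_at n u)"
| "closed_at n (Shift t) = closed_at (Suc n) t"
| "closed_at n (Reset t) = closed_at n t"

definition closed :: "tm \<Rightarrow> bool" where
  "closed t = closed_at 0 t"

fun lift :: "nat \<Rightarrow> tm \<Rightarrow> tm" where
  "lift k (Var n) = (if n < k then Var n else Var (Suc n))"
| "lift k (Lam t) = Lam (lift (Suc k) t)"
| "lift k (App t u) = App (lift k t) (lift k u)"
| "lift k (Shift t) = Shift (lift (Suc k) t)"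
| "lift k (Reset t) = Reset (lift k t)"

fun subst :: "nat \<Rightarrow> tm \<Rightarrow> tm \<Rightarrow> tm" where
  "subst k s (Var n) = (if n = k then s else if k < n then Var (n - 1) else Var n)"
| "subst k s (Lam t) = Lam (subst (Suc k) (lift 0 s) t)"
| "subst k s (App t u) = App (subst k s t) (subst k s u)"
| "subst k s (Shift t) = Shift (subst (Suc k) (lift 0 s) t)"
| "subst k s (Reset t) = Reset (subst k s t)"

text \<open>t{s/x} where x is the binder (index 0) of the body t\<close>
definition subst0 :: "tm \<Rightarrow> tm \<Rightarrow> tm" where
  "subst0 t s = subst 0 s t"

fun is_val :: "tm \<Rightarrow> bool" where
  "is_val (Lam _) = True"
| "is_val _ = False"

definition is_prog :: "tm \<Rightarrow> bool" where
  "is_prog t = (\<exists>u. t = Reset u)"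

datatype ctx = Hole | CArg tm ctx | CFun ctx tm | CRst ctx
  (* CArg v C = v C ; CFun C t = C t ; CRst C = <C> *)

fun plug :: "ctx \<Rightarrow> tm \<Rightarrow> tm" where
  "plug Hole t = t"
| "plug (CArg v C) t = App v (plug C t)"
| "plug (CFun C u) t = App (plug C t) u"
| "plug (CRst C) t = Reset (plug C t)"

fun liftC :: "nat \<Rightarrow> ctx \<Rightarrow> ctx" where
  "liftC k Hole = Hole"
| "liftC k (CArg v C) = CArg (lift k v) (liftC k C)"
| "liftC k (CFun C u) = CFun (liftC k C) (lift k u)"
| "liftC k (CRst C) = CRst (liftC k C)"

fun evctx :: "ctx \<Rightarrow> bool" where
  "evctx Hole = True"
| "evctx (CArg v C) = (is_val v \<and> evctx C)"
| "evctx (CFun C u) = evctx C"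
| "evctx (CRst C) = evctx C"

fun pure :: "ctx \<Rightarrow> bool" where
  "pure Hole = True"
| "pure (CArg v C) = (is_val v \<and> pure C)"
| "pure (CFun C u) = pure C"
| "pure (CRst C) = False"

text \<open>the captured continuation  lambda x. < D[C[x]] > \<close>
definition kont :: "ctx \<Rightarrow> ctx \<Rightarrow> tm" where
  "kont D C = Lam (Reset (plug (liftC 0 D) (plug (liftC 0 C) (Var 0))))"

inductive step :: "tm \<Rightarrow> tm \<Rightarrow> bool" where
  beta: "\<lbrakk>evctx F; is_val v\<rbrakk> \<Longrightarrow> step (plug F (App (Lam t) v)) (plug F (subst0 t v))"
| shift: "\<lbrakk>evctx F; pure E\<rbrakk> \<Longrightarrow>
     step (plug F (Reset (plug E (Shift t)))) (plug F (Reset (subst0 t (kont Hole E))))"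
| reset: "\<lbrakk>evctx F; is_val v\<rbrakk> \<Longrightarrow> step (plug F (Reset v)) (plug F v)"

abbreviation steps :: "tm \<Rightarrow> tm \<Rightarrow> bool" where
  "steps \<equiv> step\<^sup>*\<^sup>*"

definition stuck :: "tm \<Rightarrow> bool" where
  "stuck t = (\<not> is_val t \<and> (\<nexists>u. step t u))"

type_synonym env = "(tm \<times> tm) set"

inductive tilde0 :: "env \<Rightarrow> tm \<Rightarrow> tm \<Rightarrow> bool" for R where
  base: "(t0, t1) \<in> R \<Longrightarrow> tilde0 R t0 t1"
| var: "tilde0 R (Var n) (Var n)"
| lam: "tilde0 R t0 t1 \<Longrightarrow> tilde0 R (Lam t0) (Lam t1)"
| app: "\<lbrakk>tilde0 R t0 t1; tilde0 R u0 u1\<rbrakk> \<Longrightarrow> tilde0 R (App t0 u0) (App t1 u1)"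
| shf: "tilde0 R t0 t1 \<Longrightarrow> tilde0 R (Shift t0) (Shift t1)"
| rst: "tilde0 R t0 t1 \<Longrightarrow> tilde0 R (Reset t0) (Reset t1)"

definition tilde :: "env \<Rightarrow> tm \<Rightarrow> tm \<Rightarrow> bool" where
  "tilde R t0 t1 = (tilde0 R t0 t1 \<and> closed t0 \<and> closed t1)"

inductive hat :: "env \<Rightarrow> ctx \<Rightarrow> ctx \<Rightarrow> bool" for R where
  hole: "hat R Hole Hole"
| arg: "\<lbrakk>hat R F0 F1; tilde R v0 v1; is_val v0; is_val v1\<rbrakk> \<Longrightarrow> hat R (CArg v0 F0) (CArg v1 F1)"
| fn: "\<lbrakk>hat R F0 F1; tilde R t0 t1\<rbrakk> \<Longrightarrow> hat R (CFun F0 t0) (CFun F1 t1)"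
| rs: "hat R F0 F1 \<Longrightarrow> hat R (CRst F0) (CRst F1)"

type_synonym envrel = "env set \<times> (env \<times> tm \<times> tm) set"

definition relaxed_env :: "env \<Rightarrow> bool" where
  "relaxed_env E = (\<forall>(a, b) \<in> E. closed a \<and> closed b \<and>
      ((is_val a \<and> is_val b) \<or> (stuck a \<and> stuck b)))"

definition relaxed_bisim :: "envrel \<Rightarrow> bool" where
  "relaxed_bisim X =
   ((\<forall>E \<in> fst X. relaxed_env E) \<and>
    (\<forall>(E, t0, t1) \<in> snd X. relaxed_env E \<and> closed t0 \<and> closed t1) \<and>
    (\<forall>E t0 t1. (E, t0, t1) \<in> snd X \<longrightarrow>
       (\<forall>t0'. step t0 t0' \<longrightarrow> (\<exists>t1'. steps t1 t1' \<and> (E, t0', t1') \<in> snd X)) \<and>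
       (is_val t0 \<longrightarrow> (\<exists>v1. steps t1 v1 \<and> is_val v1 \<and> E \<union> {(t0, v1)} \<in> fst X)) \<and>
       (stuck t0 \<longrightarrow> (\<exists>t1'. steps t1 t1' \<and> stuck t1' \<and> E \<union> {(t0, t1')} \<in> fst X)) \<and>
       (\<forall>t1'. step t1 t1' \<longrightarrow> (\<exists>t0'. steps t0 t0' \<and> (E, t0', t1') \<in> snd X)) \<and>
       (is_val t1 \<longrightarrow> (\<exists>v0. steps t0 v0 \<and> is_val v0 \<and> E \<union> {(v0, t1)} \<in> fst X)) \<and>
       (stuck t1 \<longrightarrow> (\<exists>t0'. steps t0 t0' \<and> stuck t0' \<and> E \<union> {(t0', t1)} \<in> fst X))) \<and>
    (\<forall>E \<in> fst X.
       (\<forall>s0 s1 v0 v1. (Lam s0, Lam s1) \<in> E \<and> is_val v0 \<and> is_val v1 \<and> tilde E v0 v1 \<longrightarrow>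
          (E, subst0 s0 v0, subst0 s1 v1) \<in> snd X) \<and>
       (\<forall>C0 s0 C1 s1 D0 D1. pure C0 \<and> pure C1 \<and> (plug C0 (Shift s0), plug C1 (Shift s1)) \<in> E \<and>
          pure D0 \<and> pure D1 \<and> hat E D0 D1 \<longrightarrow>
          (E, Reset (subst0 s0 (kont D0 C0)), Reset (subst0 s1 (kont D1 C1))) \<in> snd X)))"

definition rbisim :: envrel where
  "rbisim = (\<Union>{fst X | X. relaxed_bisim X}, \<Union>{snd X | X. relaxed_bisim X})"

definition prog_env :: "env \<Rightarrow> bool" where
  "prog_env E = (\<forall>(a, b) \<in> E. closed a \<and> closed b \<and> is_val a \<and> is_val b)"

definition prog_bisim :: "envrel \<Rightarrow> bool" where
  "prog_bisim X =
   ((\<forall>E \<in> fst X. prog_env E) \<and>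
    (\<forall>(E, t0, t1) \<in> snd X. prog_env E \<and> closed t0 \<and> closed t1) \<and>
    (\<forall>E t0 t1. (E, t0, t1) \<in> snd X \<and> \<not> (is_prog t0 \<and> is_prog t1) \<longrightarrow>
       (\<forall>D0 D1. pure D0 \<and> pure D1 \<and> hat E D0 D1 \<longrightarrow>
          (E, Reset (plug D0 t0), Reset (plug D1 t1)) \<in> snd X)) \<and>
    (\<forall>E p0 p1. (E, p0, p1) \<in> snd X \<and> is_prog p0 \<and> is_prog p1 \<longrightarrow>
       (\<forall>p0'. step p0 p0' \<and> is_prog p0' \<longrightarrow>
          (\<exists>p1'. steps p1 p1' \<and> is_prog p1' \<and> (E, p0', p1') \<in> snd X)) \<and>
       (\<forall>v0. step p0 v0 \<and> is_val v0 \<longrightarrow>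
          (\<exists>v1. steps p1 v1 \<and> is_val v1 \<and> {(v0, v1)} \<union> E \<in> fst X)) \<and>
       (\<forall>p1'. step p1 p1' \<and> is_prog p1' \<longrightarrow>
          (\<exists>p0'. steps p0 p0' \<and> is_prog p0' \<and> (E, p0', p1') \<in> snd X)) \<and>
       (\<forall>v1. step p1 v1 \<and> is_val v1 \<longrightarrow>
          (\<exists>v0. steps p0 v0 \<and> is_val v0 \<and> {(v0, v1)} \<union> E \<in> fst X))) \<and>
    (\<forall>E \<in> fst X. \<forall>s0 s1 v0 v1. (Lam s0, Lam s1) \<in> E \<and> is_val v0 \<and> is_val v1 \<and> tilde E v0 v1 \<longrightarrow>
          (E, subst0 s0 v0, subst0 s1 v1) \<in> snd X))"

definition pbisim :: envrel where
  "pbisim = (\<Union>{fst X | X. prog_bisim X}, \<Union>{snd X | X. prog_bisim X})"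

end

theory Submission
  imports Defs
begin

text \<open>A relaxed bisimulation X is turned into a program bisimulation. Its environments consist
  of pairs of values related by the closure of an environment of X; its terms are related by the
  context closure of X: a triple of X placed in related evaluation contexts, or a pair in the
  closure of an environment of X. A step of such a pair is either a step inside the triple, answered
  by X, or a step of terms related by a closure. There the redexes correspond structurally, unless
  the left redex meets a pair of the environment: a pair of abstractions is handled by the
  beta-clause of X, a stuck pair caught by a captured continuation by its shift clause. Since
  reduction is deterministic, the simulating reductions can be realigned with the program steps.\<close>

section \<open>Closed terms and contexts\<close>

lemma closed_at_mono: "closed_at n t \<Longrightarrow> n \<le> m \<Longrightarrow> closed_at m t"
  by (induction t arbitrary: n m) auto

lemma lift_closed_at: "closed_at n t \<Longrightarrow> n \<le> k \<Longrightarrow> lift k t = t"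
  by (induction t arbitrary: n k) auto

lemma lift_closed [simp]: "closed t \<Longrightarrow> lift k t = t"
  using lift_closed_at closed_def by blast

lemma subst_closed_at: "closed_at n t \<Longrightarrow> n \<le> k \<Longrightarrow> subst k s t = t"
  by (induction t arbitrary: n k s) auto

lemma closed_at_subst:
  "closed_at (Suc n) t \<Longrightarrow> closed s \<Longrightarrow> k \<le> n \<Longrightarrow> closed_at n (subst k s t)"
proof (induction t arbitrary: n k)
  case (Var m)
  then show ?case using closed_at_mono[of 0 s n] by (auto simp: closed_def)
qed (auto simp: closed_def)

lemma closed_subst0: "closed (Lam t) \<Longrightarrow> closed s \<Longrightarrow> closed (subst0 t s)"
  by (simp add: closed_def subst0_def closed_at_subst)

fun closed_ctx :: "nat \<Rightarrow> ctx \<Rightarrow> bool" where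
  "closed_ctx n Hole = True"
| "closed_ctx n (CArg v C) = (closed_at n v \<and> closed_ctx n C)"
| "closed_ctx n (CFun C u) = (closed_ctx n C \<and> closed_at n u)"
| "closed_ctx n (CRst C) = closed_ctx n C"

lemma closed_at_plug [simp]: "closed_at n (plug C t) = (closed_ctx n C \<and> closed_at n t)"
  by (induction C) auto

lemma closed_ctx_mono: "closed_ctx n C \<Longrightarrow> n \<le> m \<Longrightarrow> closed_ctx m C"
  by (induction C) (auto intro: closed_at_mono)

lemma liftC_closed_ctx: "closed_ctx n C \<Longrightarrow> n \<le> k \<Longrightarrow> liftC k C = C"
  by (induction C) (auto intro: lift_closed_at)

fun ctx_comp :: "ctx \<Rightarrow> ctx \<Rightarrow> ctx" where
  "ctx_comp Hole G = G"
| "ctx_comp (CArg v F) G = CArg v (ctx_comp F G)"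
| "ctx_comp (CFun F u) G = CFun (ctx_comp F G) u"
| "ctx_comp (CRst F) G = CRst (ctx_comp F G)"

lemma plug_ctx_comp [simp]: "plug (ctx_comp F G) t = plug F (plug G t)"
  by (induction F) auto

lemma evctx_ctx_comp [simp]: "evctx (ctx_comp F G) = (evctx F \<and> evctx G)"
  by (induction F) auto

lemma pure_ctx_comp [simp]: "pure (ctx_comp F G) = (pure F \<and> pure G)"
  by (induction F) auto

lemma liftC_ctx_comp [simp]: "liftC k (ctx_comp F G) = ctx_comp (liftC k F) (liftC k G)"
  by (induction F) auto

lemma closed_ctx_comp [simp]: "closed_ctx n (ctx_comp F G) = (closed_ctx n F \<and> closed_ctx n G)"
  by (induction F) auto

lemma ctx_comp_Hole [simp]: "ctx_comp F Hole = F"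
  by (induction F) auto

lemma pure_imp_evctx: "pure F \<Longrightarrow> evctx F"
  by (induction F) auto

lemma kont_Hole_ctx_comp: "kont Hole (ctx_comp G1 G2) = kont G1 G2"
  by (simp add: kont_def)

lemma kont_Hole_closed: "closed_ctx 0 G \<Longrightarrow> kont Hole G = Lam (Reset (plug G (Var 0)))"
  by (simp add: kont_def liftC_closed_ctx)

lemma closed_kont_Hole: "closed_ctx 0 G \<Longrightarrow> closed (kont Hole G)"
  using closed_ctx_mono[of 0 G 1] by (simp add: kont_Hole_closed closed_def)

section \<open>Reduction\<close>

inductive contr :: "tm \<Rightarrow> tm \<Rightarrow> bool" where
  contr_beta: "is_val v \<Longrightarrow> contr (App (Lam t) v) (subst0 t v)"
| contr_shift: "pure E \<Longrightarrow> contr (Reset (plug E (Shift t))) (Reset (subst0 t (kont Hole E)))"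
| contr_reset: "is_val v \<Longrightarrow> contr (Reset v) v"

lemma step_iff_contr: "step t t' \<longleftrightarrow> (\<exists>F r c. evctx F \<and> contr r c \<and> t = plug F r \<and> t' = plug F c)"
proof
  assume "step t t'"
  then show "\<exists>F r c. evctx F \<and> contr r c \<and> t = plug F r \<and> t' = plug F c"
    by induction (blast intro: contr.intros)+
qed (auto elim!: contr.cases intro: step.intros)

lemma step_plug: "step t t' \<Longrightarrow> evctx F \<Longrightarrow> step (plug F t) (plug F t')"
  unfolding step_iff_contr by (metis evctx_ctx_comp plug_ctx_comp)

lemma steps_plug: "steps t t' \<Longrightarrow> evctx F \<Longrightarrow> steps (plug F t) (plug F t')"
  by (induction rule: rtranclp_induct) (auto intro: rtranclp.rtrancl_into_rtrancl step_plug)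

lemma step_closed: "step t t' \<Longrightarrow> closed t \<Longrightarrow> closed t'"
  by (induction rule: step.induct)
    (auto simp: closed_def subst0_def closed_kont_Hole[unfolded closed_def] intro!: closed_at_subst)

lemma steps_closed: "steps t t' \<Longrightarrow> closed t \<Longrightarrow> closed t'"
  by (induction rule: rtranclp_induct) (auto dest: step_closed)

lemma plug_eq_Lam: "plug G r = Lam t \<Longrightarrow> G = Hole \<and> r = Lam t"
  by (cases G) auto

lemma is_val_plug: "is_val (plug G r) \<Longrightarrow> G = Hole \<and> is_val r"
  by (cases G) auto

lemma contr_not_val: "contr r c \<Longrightarrow> \<not> is_val r"
  by (auto simp: contr.simps)

lemma is_val_no_step: "is_val t \<Longrightarrow> \<not> step t t'"
  by (auto simp: step_iff_contr dest!: is_val_plug contr_not_val)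

lemma not_is_val_plug_Shift: "\<not> is_val (plug E (Shift t))"
  by (auto dest!: is_val_plug)

lemma plug_contr_neq_plug_Shift:
  "pure E \<Longrightarrow> evctx G \<Longrightarrow> contr r c \<Longrightarrow> plug G r \<noteq> plug E (Shift t)"
proof (induction E arbitrary: G)
  case Hole
  then show ?case by (cases G) (auto simp: contr.simps)
next
  case (CArg v E)
  then show ?case
    by (cases G) (auto simp: contr.simps not_is_val_plug_Shift dest: is_val_plug)
next
  case (CFun E u)
  then show ?case
    by (cases G) (auto simp: contr.simps not_is_val_plug_Shift dest: is_val_plug contr_not_val plug_eq_Lam)
next
  case (CRst E)
  then show ?case by simp
qed

lemma contr_plug_contr_Hole:
  "contr (plug G r) c \<Longrightarrow> evctx G \<Longrightarrow> contr r c' \<Longrightarrow> G = Hole"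
proof (cases G)
  case (CRst G')
  assume "contr (plug G r) c" "evctx G" "contr r c'"
  then show ?thesis
    using CRst plug_contr_neq_plug_Shift[of _ G' r c'] by (auto simp: contr.simps dest!: is_val_plug)
qed (auto simp: contr.simps dest!: is_val_plug contr_not_val plug_eq_Lam)

lemma plug_contr_unique:
  "evctx F \<Longrightarrow> evctx F' \<Longrightarrow> contr r c \<Longrightarrow> contr r' c' \<Longrightarrow> plug F r = plug F' r' \<Longrightarrow> F = F' \<and> r = r'"
proof (induction F arbitrary: F')
  case Hole
  then show ?case using contr_plug_contr_Hole[of F' r' c c'] by simp
next
  case (CArg v F)
  then show ?case
    using contr_plug_contr_Hole[of "CArg v F" r c' c]
    by (cases F') (auto dest: is_val_plug contr_not_val)
next
  case (CFun F u)
  then show ?case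
    using contr_plug_contr_Hole[of "CFun F u" r c' c]
    by (cases F') (auto dest: is_val_plug contr_not_val)
next
  case (CRst F)
  then show ?case
    using contr_plug_contr_Hole[of "CRst F" r c' c]
    by (cases F') auto
qed

lemma plug_Shift_inj:
  "pure E \<Longrightarrow> pure E' \<Longrightarrow> plug E (Shift t) = plug E' (Shift t') \<Longrightarrow> E = E' \<and> t = t'"
proof (induction E arbitrary: E')
  case Hole
  then show ?case by (cases E') auto
next
  case (CArg v E)
  then show ?case by (cases E') (auto simp: not_is_val_plug_Shift dest!: is_val_plug)
next
  case (CFun E u)
  then show ?case by (cases E') (auto simp: not_is_val_plug_Shift dest!: is_val_plug)
next
  case (CRst E)
  then show ?case by simp
qed

lemma contr_deterministic: "contr r c \<Longrightarrow> contr r c' \<Longrightarrow> c = c'"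
proof (induction rule: contr.induct)
  case (contr_beta v t)
  from contr_beta.prems show ?case by cases auto
next
  case (contr_shift E t)
  from contr_shift.prems show ?case
  proof cases
    case (contr_shift E' t')
    then show ?thesis using plug_Shift_inj[of E E' t t'] \<open>pure E\<close> by simp
  qed (use not_is_val_plug_Shift in auto)
next
  case (contr_reset v)
  from contr_reset.prems show ?case
    by cases (use contr_reset.hyps not_is_val_plug_Shift in simp_all)
qed

lemma step_deterministic: "step t t1 \<Longrightarrow> step t t2 \<Longrightarrow> t1 = t2"
proof -
  assume "step t t1" "step t t2"
  then obtain F r c F' r' c' where
    "evctx F" "contr r c" "t = plug F r" "t1 = plug F c"
    "evctx F'" "contr r' c'" "t = plug F' r'" "t2 = plug F' c'"
    unfolding step_iff_contr by blast
  then show ?thesis using plug_contr_unique[of F F' r c r' c'] contr_deterministic by auto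
qed

lemma progress:
  "closed t \<Longrightarrow> is_val t \<or> (\<exists>u. step t u) \<or> (\<exists>C s. pure C \<and> t = plug C (Shift s))"
  unfolding closed_def
proof (induction t)
  case (App t1 t2)
  have closed: "closed_at 0 t1" "closed_at 0 t2" using App.prems by auto
  from App.IH(1)[OF closed(1)] show ?case
  proof (elim disjE exE conjE)
    assume "is_val t1"
    from App.IH(2)[OF closed(2)] show ?thesis
    proof (elim disjE exE conjE)
      assume "is_val t2"
      then show ?thesis using \<open>is_val t1\<close> step.beta[of Hole t2] by (cases t1) auto
    next
      fix u assume "step t2 u"
      then show ?thesis using step_plug[of t2 u "CArg t1 Hole"] \<open>is_val t1\<close> by auto
    next
      fix C s assume "pure C" "t2 = plug C (Shift s)"
      then show ?thesis using \<open>is_val t1\<close> by (auto intro!: exI[of _ "CArg t1 C"])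
    qed
  next
    fix u assume "step t1 u"
    then show ?thesis using step_plug[of t1 u "CFun Hole t2"] by auto
  next
    fix C s assume "pure C" "t1 = plug C (Shift s)"
    then show ?thesis by (auto intro!: exI[of _ "CFun C t2"])
  qed
next
  case (Reset t)
  then consider "is_val t" | u where "step t u" | C s where "pure C" "t = plug C (Shift s)"
    by auto
  then show ?case
  proof cases
    case 1
    then show ?thesis using step.reset[of Hole t] by auto
  next
    case (2 u)
    then show ?thesis using step_plug[of t u "CRst Hole"] by auto
  next
    case (3 C s)
    then show ?thesis using step.shift[of Hole C s] by auto
  qed
qed (auto intro!: exI[of _ Hole])

lemma stuck_imp_plug_Shift: "closed t \<Longrightarrow> stuck t \<Longrightarrow> \<exists>C s. pure C \<and> t = plug C (Shift s)"
  using progress by (auto simp: stuck_def)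

lemma plug_contr_not_stuck: "evctx G \<Longrightarrow> contr r c \<Longrightarrow> \<not> stuck (plug G r)"
  unfolding stuck_def step_iff_contr by blast

section \<open>Closures of environments\<close>

lemma tilde0_converse: "tilde0 E a b \<Longrightarrow> tilde0 (E\<inverse>) b a"
  by (induction rule: tilde0.induct) (auto intro: tilde0.intros)

lemma tilde0_converse_iff: "tilde0 (E\<inverse>) b a \<longleftrightarrow> tilde0 E a b"
  using tilde0_converse[of E a b] tilde0_converse[of "E\<inverse>" b a] by auto

lemma tilde_converse_iff: "tilde (E\<inverse>) b a \<longleftrightarrow> tilde E a b"
  by (auto simp: tilde_def tilde0_converse_iff)

lemma tilde0_mono: "tilde0 E a b \<Longrightarrow> E \<subseteq> E' \<Longrightarrow> tilde0 E' a b"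
  by (induction rule: tilde0.induct) (auto intro: tilde0.intros)

lemma tilde_mono: "tilde E a b \<Longrightarrow> E \<subseteq> E' \<Longrightarrow> tilde E' a b"
  by (auto simp: tilde_def intro: tilde0_mono)

lemma tilde0_subset_tilde0: "tilde0 R a b \<Longrightarrow> (\<forall>(x, y) \<in> R. tilde0 E x y) \<Longrightarrow> tilde0 E a b"
  by (induction rule: tilde0.induct) (auto intro: tilde0.intros)

definition closed_env :: "env \<Rightarrow> bool" where
  "closed_env E = (\<forall>(a, b) \<in> E. closed a \<and> closed b)"

lemma relaxed_env_closed_env: "relaxed_env E \<Longrightarrow> closed_env E"
  by (auto simp: relaxed_env_def closed_env_def)

lemma tilde0_subst:
  "tilde0 E t t' \<Longrightarrow> closed_env E \<Longrightarrow> tilde0 E s s' \<Longrightarrow> closed s \<Longrightarrow> closed s' \<Longrightarrow>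
    tilde0 E (subst k s t) (subst k s' t')"
proof (induction arbitrary: k rule: tilde0.induct)
  case (base t0 t1)
  then have "subst k s t0 = t0" "subst k s' t1 = t1"
    by (auto simp: closed_env_def closed_def intro: subst_closed_at)
  with base show ?case by (auto intro: tilde0.base)
qed (auto intro: tilde0.intros)

lemma tilde0_subst0:
  "closed_env E \<Longrightarrow> tilde0 E t t' \<Longrightarrow> tilde0 E s s' \<Longrightarrow> closed s \<Longrightarrow> closed s' \<Longrightarrow>
    tilde0 E (subst0 t s) (subst0 t' s')"
  unfolding subst0_def using tilde0_subst by blast

lemma tilde0_is_val: "tilde0 E v w \<Longrightarrow> relaxed_env E \<Longrightarrow> is_val v \<Longrightarrow> is_val w"
  by (induction rule: tilde0.induct) (auto simp: relaxed_env_def stuck_def)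

inductive ctx_rel :: "env \<Rightarrow> ctx \<Rightarrow> ctx \<Rightarrow> bool" for R where
  Hole: "ctx_rel R Hole Hole"
| CArg: "tilde0 R v0 v1 \<Longrightarrow> ctx_rel R F0 F1 \<Longrightarrow> ctx_rel R (CArg v0 F0) (CArg v1 F1)"
| CFun: "ctx_rel R F0 F1 \<Longrightarrow> tilde0 R t0 t1 \<Longrightarrow> ctx_rel R (CFun F0 t0) (CFun F1 t1)"
| CRst: "ctx_rel R F0 F1 \<Longrightarrow> ctx_rel R (CRst F0) (CRst F1)"

lemma ctx_rel_plug: "ctx_rel R F0 F1 \<Longrightarrow> tilde0 R t0 t1 \<Longrightarrow> tilde0 R (plug F0 t0) (plug F1 t1)"
  by (induction rule: ctx_rel.induct) (auto intro: tilde0.intros)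

lemma ctx_rel_ctx_comp:
  "ctx_rel R F0 F1 \<Longrightarrow> ctx_rel R G0 G1 \<Longrightarrow> ctx_rel R (ctx_comp F0 G0) (ctx_comp F1 G1)"
  by (induction rule: ctx_rel.induct) (auto intro: ctx_rel.intros)

lemma ctx_rel_mono: "ctx_rel R F0 F1 \<Longrightarrow> R \<subseteq> R' \<Longrightarrow> ctx_rel R' F0 F1"
  by (induction rule: ctx_rel.induct) (auto intro: ctx_rel.intros tilde0_mono)

lemma ctx_rel_subset_tilde0: "ctx_rel R F0 F1 \<Longrightarrow> (\<forall>(a, b) \<in> R. tilde0 E a b) \<Longrightarrow> ctx_rel E F0 F1"
  by (induction rule: ctx_rel.induct) (auto intro: ctx_rel.intros tilde0_subset_tilde0)

lemma ctx_rel_converse: "ctx_rel R F0 F1 \<Longrightarrow> ctx_rel (R\<inverse>) F1 F0"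
  by (induction rule: ctx_rel.induct) (auto intro: ctx_rel.intros tilde0_converse)

lemma ctx_rel_converse_iff: "ctx_rel (R\<inverse>) F1 F0 \<longleftrightarrow> ctx_rel R F0 F1"
  using ctx_rel_converse[of R F0 F1] ctx_rel_converse[of "R\<inverse>" F1 F0] by auto

lemma ctx_rel_evctx: "ctx_rel R F0 F1 \<Longrightarrow> relaxed_env R \<Longrightarrow> evctx F0 \<Longrightarrow> evctx F1"
  by (induction rule: ctx_rel.induct) (auto dest: tilde0_is_val)

lemma ctx_rel_pure: "ctx_rel R F0 F1 \<Longrightarrow> relaxed_env R \<Longrightarrow> pure F0 \<Longrightarrow> pure F1"
  by (induction rule: ctx_rel.induct) (auto dest: tilde0_is_val)

lemma ctx_rel_Hole_iff: "ctx_rel R Hole F \<longleftrightarrow> F = Hole"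
  by (auto elim: ctx_rel.cases intro: ctx_rel.Hole)

lemma hat_iff_ctx_rel:
  "hat R D0 D1 \<longleftrightarrow> ctx_rel R D0 D1 \<and> evctx D0 \<and> evctx D1 \<and> closed_ctx 0 D0 \<and> closed_ctx 0 D1"
proof
  assume "hat R D0 D1"
  then show "ctx_rel R D0 D1 \<and> evctx D0 \<and> evctx D1 \<and> closed_ctx 0 D0 \<and> closed_ctx 0 D1"
    by induction (auto simp: tilde_def closed_def intro: ctx_rel.intros)
next
  assume "ctx_rel R D0 D1 \<and> evctx D0 \<and> evctx D1 \<and> closed_ctx 0 D0 \<and> closed_ctx 0 D1"
  then have "ctx_rel R D0 D1" "evctx D0" "evctx D1" "closed_ctx 0 D0" "closed_ctx 0 D1"
    by auto
  then show "hat R D0 D1"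
    by (induction rule: ctx_rel.induct) (auto simp: tilde_def closed_def intro: hat.intros)
qed

lemma hat_converse_iff: "hat (R\<inverse>) D1 D0 \<longleftrightarrow> hat R D0 D1"
  by (auto simp: hat_iff_ctx_rel ctx_rel_converse_iff)

inductive_cases tilde0_AppE: "tilde0 E (App a b) x"
inductive_cases tilde0_ResetE: "tilde0 E (Reset a) x"
inductive_cases tilde0_LamE: "tilde0 E (Lam a) x"
inductive_cases tilde0_ShiftE: "tilde0 E (Shift a) x"

lemma tilde0_plug_cases:
  assumes "tilde0 E (plug G r) x"
  obtains (inner) G' r' where "x = plug G' r'" "ctx_rel E G G'" "tilde0 E r r'"
  | (base) G1 G2 G1' l where "G = ctx_comp G1 G2" "x = plug G1' l" "ctx_rel E G1 G1'" "(plug G2 r, l) \<in> E"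
  using assms
proof (induction G arbitrary: x thesis)
  case Hole
  then show ?case by (metis ctx_rel.Hole plug.simps(1))
next
  case (CArg v G)
  from CArg.prems(3)[unfolded plug.simps] show ?case
  proof (rule tilde0_AppE)
    assume "(App v (plug G r), x) \<in> E"
    then show ?thesis using CArg.prems(2)[of Hole "CArg v G" Hole x] ctx_rel.Hole by simp
  next
    fix t1 u1
    assume app: "x = App t1 u1" "tilde0 E v t1" "tilde0 E (plug G r) u1"
    show ?thesis
    proof (rule CArg.IH[OF _ _ app(3)])
      fix G' r' assume "u1 = plug G' r'" "ctx_rel E G G'" "tilde0 E r r'"
      then show ?thesis using CArg.prems(1)[of "CArg t1 G'" r'] app by (auto intro: ctx_rel.intros)
    next
      fix G1 G2 G1' l assume "G = ctx_comp G1 G2" "u1 = plug G1' l" "ctx_rel E G1 G1'" "(plug G2 r, l) \<in> E"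
      then show ?thesis using CArg.prems(2)[of "CArg v G1" G2 "CArg t1 G1'" l] app
        by (auto intro: ctx_rel.intros)
    qed
  qed
next
  case (CFun G u)
  from CFun.prems(3)[unfolded plug.simps] show ?case
  proof (rule tilde0_AppE)
    assume "(App (plug G r) u, x) \<in> E"
    then show ?thesis using CFun.prems(2)[of Hole "CFun G u" Hole x] ctx_rel.Hole by simp
  next
    fix t1 u1
    assume app: "x = App t1 u1" "tilde0 E (plug G r) t1" "tilde0 E u u1"
    show ?thesis
    proof (rule CFun.IH[OF _ _ app(2)])
      fix G' r' assume "t1 = plug G' r'" "ctx_rel E G G'" "tilde0 E r r'"
      then show ?thesis using CFun.prems(1)[of "CFun G' u1" r'] app by (auto intro: ctx_rel.intros)
    next
      fix G1 G2 G1' l assume "G = ctx_comp G1 G2" "t1 = plug G1' l" "ctx_rel E G1 G1'" "(plug G2 r, l) \<in> E"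
      then show ?thesis using CFun.prems(2)[of "CFun G1 u" G2 "CFun G1' u1" l] app
        by (auto intro: ctx_rel.intros)
    qed
  qed
next
  case (CRst G)
  from CRst.prems(3)[unfolded plug.simps] show ?case
  proof (rule tilde0_ResetE)
    assume "(Reset (plug G r), x) \<in> E"
    then show ?thesis using CRst.prems(2)[of Hole "CRst G" Hole x] ctx_rel.Hole by simp
  next
    fix t1
    assume rst: "x = Reset t1" "tilde0 E (plug G r) t1"
    show ?thesis
    proof (rule CRst.IH[OF _ _ rst(2)])
      fix G' r' assume "t1 = plug G' r'" "ctx_rel E G G'" "tilde0 E r r'"
      then show ?thesis using CRst.prems(1)[of "CRst G'" r'] rst by (auto intro: ctx_rel.intros)
    next
      fix G1 G2 G1' l assume "G = ctx_comp G1 G2" "t1 = plug G1' l" "ctx_rel E G1 G1'" "(plug G2 r, l) \<in> E"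
      then show ?thesis using CRst.prems(2)[of "CRst G1" G2 "CRst G1'" l] rst
        by (auto intro: ctx_rel.intros)
    qed
  qed
qed

section \<open>Relaxed bisimulations\<close>

locale relaxed_bisimulation =
  fixes X :: envrel
  assumes relaxed_bisim: "relaxed_bisim X"
begin

lemma env_relaxed: "E \<in> fst X \<Longrightarrow> relaxed_env E"
  using relaxed_bisim[unfolded relaxed_bisim_def, THEN conjunct1] by blast

lemma triple_relaxed: "(E, t0, t1) \<in> snd X \<Longrightarrow> relaxed_env E \<and> closed t0 \<and> closed t1"
  using relaxed_bisim[unfolded relaxed_bisim_def, THEN conjunct2, THEN conjunct1] by blast

lemmas triple_clauses =
  relaxed_bisim[unfolded relaxed_bisim_def, THEN conjunct2, THEN conjunct2, THEN conjunct1, rule_format]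

lemmas env_clauses =
  relaxed_bisim[unfolded relaxed_bisim_def, THEN conjunct2, THEN conjunct2, THEN conjunct2, rule_format]

lemma step_left:
  "(E, t0, t1) \<in> snd X \<Longrightarrow> step t0 t0' \<Longrightarrow> \<exists>t1'. steps t1 t1' \<and> (E, t0', t1') \<in> snd X"
  using triple_clauses by simp

lemma val_left:
  "(E, t0, t1) \<in> snd X \<Longrightarrow> is_val t0 \<Longrightarrow> \<exists>v1. steps t1 v1 \<and> is_val v1 \<and> insert (t0, v1) E \<in> fst X"
  using triple_clauses by simp

lemma stuck_left:
  "(E, t0, t1) \<in> snd X \<Longrightarrow> stuck t0 \<Longrightarrow> \<exists>t1'. steps t1 t1' \<and> stuck t1' \<and> insert (t0, t1') E \<in> fst X"
  using triple_clauses by simp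

lemma step_right:
  "(E, t0, t1) \<in> snd X \<Longrightarrow> step t1 t1' \<Longrightarrow> \<exists>t0'. steps t0 t0' \<and> (E, t0', t1') \<in> snd X"
  using triple_clauses by simp

lemma val_right:
  "(E, t0, t1) \<in> snd X \<Longrightarrow> is_val t1 \<Longrightarrow> \<exists>v0. steps t0 v0 \<and> is_val v0 \<and> insert (v0, t1) E \<in> fst X"
  using triple_clauses by simp

lemma stuck_right:
  "(E, t0, t1) \<in> snd X \<Longrightarrow> stuck t1 \<Longrightarrow> \<exists>t0'. steps t0 t0' \<and> stuck t0' \<and> insert (t0', t1) E \<in> fst X"
  using triple_clauses by simp

lemma lam_clause:
  "E \<in> fst X \<Longrightarrow> (Lam s0, Lam s1) \<in> E \<Longrightarrow> is_val v0 \<Longrightarrow> is_val v1 \<Longrightarrow> tilde E v0 v1 \<Longrightarrow>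
    (E, subst0 s0 v0, subst0 s1 v1) \<in> snd X"
  using env_clauses by blast

lemma shift_clause:
  "E \<in> fst X \<Longrightarrow> pure C0 \<Longrightarrow> pure C1 \<Longrightarrow> (plug C0 (Shift s0), plug C1 (Shift s1)) \<in> E \<Longrightarrow>
    pure D0 \<Longrightarrow> pure D1 \<Longrightarrow> hat E D0 D1 \<Longrightarrow>
    (E, Reset (subst0 s0 (kont D0 C0)), Reset (subst0 s1 (kont D1 C1))) \<in> snd X"
  using env_clauses by blast

end

definition converse_envrel :: "envrel \<Rightarrow> envrel" where
  "converse_envrel X = (converse ` fst X, (\<lambda>(E, a, b). (E\<inverse>, b, a)) ` snd X)"

lemma fst_converse_envrel_iff [simp]: "E \<in> fst (converse_envrel X) \<longleftrightarrow> E\<inverse> \<in> fst X"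
proof
  assume "E\<inverse> \<in> fst X"
  then show "E \<in> fst (converse_envrel X)"
    unfolding converse_envrel_def using image_eqI[of E converse "E\<inverse>"] by simp
qed (auto simp: converse_envrel_def)

lemma snd_converse_envrel_iff [simp]: "(E, a, b) \<in> snd (converse_envrel X) \<longleftrightarrow> (E\<inverse>, b, a) \<in> snd X"
  unfolding converse_envrel_def by (auto intro!: image_eqI[where x = "(E\<inverse>, b, a)"])

lemma converse_insert [simp]: "(insert (a, b) R)\<inverse> = insert (b, a) (R\<inverse>)"
  by auto

lemma relaxed_env_converse_iff [simp]: "relaxed_env (E\<inverse>) \<longleftrightarrow> relaxed_env E"
  unfolding relaxed_env_def by auto

lemma ball_fst_converse_envrel_iff:
  "(\<forall>E \<in> fst (converse_envrel X). P E) \<longleftrightarrow> (\<forall>E \<in> fst X. P (E\<inverse>))"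
  by auto (metis converse_converse)

lemma (in relaxed_bisimulation) relaxed_bisim_converse_envrel: "relaxed_bisim (converse_envrel X)"
  unfolding relaxed_bisim_def ball_fst_converse_envrel_iff
  using env_relaxed
  by (intro conjI)
    (auto dest!: triple_relaxed
      simp: step_left val_left stuck_left step_right val_right stuck_right lam_clause shift_clause
        tilde_converse_iff[of "E\<inverse>" for E, simplified, symmetric]
        hat_converse_iff[of "E\<inverse>" for E, simplified, symmetric])

section \<open>Simulation up to context\<close>

lemma relaxed_env_plug_contr_notin:
  "relaxed_env E \<Longrightarrow> evctx G \<Longrightarrow> contr r c \<Longrightarrow> (plug G r, l) \<notin> E"
  unfolding relaxed_env_def using plug_contr_not_stuck is_val_plug contr_not_val by blast

lemma relaxed_env_plug_Shift_right:
  assumes "relaxed_env E" "(a, l) \<in> E" "\<not> is_val a"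
  obtains C s where "pure C" "l = plug C (Shift s)"
  using assms stuck_imp_plug_Shift unfolding relaxed_env_def by blast

text \<open>The evaluation contexts around triples of X are needed because program bisimulation
  compares terms inside related pure contexts under a reset.\<close>
definition ctx_closure :: "envrel \<Rightarrow> env \<Rightarrow> tm \<Rightarrow> tm \<Rightarrow> bool" where
  "ctx_closure X E a b \<longleftrightarrow> closed a \<and> closed b \<and>
     ((\<exists>F0 F1 u0 u1. a = plug F0 u0 \<and> b = plug F1 u1 \<and> (E, u0, u1) \<in> snd X \<and>
         ctx_rel E F0 F1 \<and> evctx F0 \<and> evctx F1) \<or>
      (E \<in> fst X \<and> tilde0 E a b))"

lemma ctx_closureE:
  assumes "ctx_closure X E a b"
  obtains (triple) F0 F1 u0 u1 where "a = plug F0 u0" "b = plug F1 u1" "(E, u0, u1) \<in> snd X"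
      "ctx_rel E F0 F1" "evctx F0" "evctx F1"
  | (tilde) "E \<in> fst X" "tilde0 E a b"
  using assms unfolding ctx_closure_def by (elim conjE disjE exE) blast+

lemma ctx_closure_closed: "ctx_closure X E a b \<Longrightarrow> closed a \<and> closed b"
  unfolding ctx_closure_def by blast

lemma ctx_closure_triple: "(E, a, b) \<in> snd X \<Longrightarrow> closed a \<Longrightarrow> closed b \<Longrightarrow> ctx_closure X E a b"
  unfolding ctx_closure_def by (metis ctx_rel.Hole evctx.simps(1) plug.simps(1))

lemma ctx_closure_tilde0: "E \<in> fst X \<Longrightarrow> tilde0 E a b \<Longrightarrow> closed a \<Longrightarrow> closed b \<Longrightarrow> ctx_closure X E a b"
  unfolding ctx_closure_def by blast

lemma ctx_closure_converse_iff: "ctx_closure (converse_envrel X) (E\<inverse>) b a \<longleftrightarrow> ctx_closure X E a b"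
  unfolding ctx_closure_def by (auto simp: ctx_rel_converse_iff tilde0_converse_iff)

context relaxed_bisimulation
begin

text \<open>A captured continuation reaching into a stuck term related by the environment: this is
  the situation the shift clause of relaxed bisimilarity is made for.\<close>
lemma tilde0_contr_shift_base:
  assumes "E \<in> fst X" and "pure G1" "pure G2" "closed_ctx 0 G1" and "ctx_rel E G1 G1'"
    and "(plug G2 (Shift t), l) \<in> E" and "closed (plug G1' l)"
  obtains c' where "contr (Reset (plug G1' l)) c'"
    "(E, Reset (subst0 t (kont Hole (ctx_comp G1 G2))), c') \<in> snd X"
proof -
  have re: "relaxed_env E" using env_relaxed[OF \<open>E \<in> fst X\<close>] .
  obtain C s where C: "pure C" "l = plug C (Shift s)"
    using relaxed_env_plug_Shift_right[OF re \<open>(plug G2 (Shift t), l) \<in> E\<close>] not_is_val_plug_Shift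
    by metis
  have "pure G1'" using ctx_rel_pure[OF \<open>ctx_rel E G1 G1'\<close> re \<open>pure G1\<close>] .
  moreover have "hat E G1 G1'"
    using assms \<open>pure G1'\<close> by (simp add: hat_iff_ctx_rel pure_imp_evctx closed_def)
  ultimately have "(E, Reset (subst0 t (kont G1 G2)), Reset (subst0 s (kont G1' C))) \<in> snd X"
    using shift_clause assms C by blast
  moreover have "contr (Reset (plug G1' l)) (Reset (subst0 s (kont G1' C)))"
    using contr_shift[of "ctx_comp G1' C" s] \<open>pure G1'\<close> C by (simp add: kont_Hole_ctx_comp)
  ultimately show ?thesis using that by (simp add: kont_Hole_ctx_comp)
qed

lemma tilde0_contr_beta:
  assumes "E \<in> fst X" "tilde0 E (App (Lam t) v) r'" "is_val v" "closed (App (Lam t) v)" "closed r'"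
  obtains c' where "contr r' c'" "tilde0 E (subst0 t v) c' \<or> (E, subst0 t v, c') \<in> snd X"
proof -
  have re: "relaxed_env E" using env_relaxed[OF \<open>E \<in> fst X\<close>] .
  have "(App (Lam t) v, r') \<notin> E"
    using relaxed_env_plug_contr_notin[OF re _ contr_beta[OF \<open>is_val v\<close>], of Hole] by simp
  with assms(2) obtain x1 x2 where x: "r' = App x1 x2" "tilde0 E (Lam t) x1" "tilde0 E v x2"
    by (auto elim: tilde0_AppE)
  have "is_val x2" using tilde0_is_val[OF x(3) re \<open>is_val v\<close>] .
  have closed: "closed v" "closed x2" "closed_at 1 t"
    using assms(4,5) x(1) by (auto simp: closed_def)
  from x(2) show ?thesis
  proof (rule tilde0_LamE)
    assume "(Lam t, x1) \<in> E"
    moreover from this obtain s where "x1 = Lam s"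
      using re unfolding relaxed_env_def stuck_def by (cases x1) auto
    moreover have "tilde E v x2" using x(3) closed by (simp add: tilde_def)
    ultimately have "(E, subst0 t v, subst0 s x2) \<in> snd X"
      using lam_clause[OF \<open>E \<in> fst X\<close>] \<open>is_val v\<close> \<open>is_val x2\<close> by blast
    then show ?thesis using that contr_beta[OF \<open>is_val x2\<close>] x(1) \<open>x1 = Lam s\<close> by blast
  next
    fix t' assume "x1 = Lam t'" "tilde0 E t t'"
    then have "tilde0 E (subst0 t v) (subst0 t' x2)"
      using tilde0_subst0[OF relaxed_env_closed_env[OF re] _ x(3)] closed by blast
    then show ?thesis using that contr_beta[OF \<open>is_val x2\<close>] x(1) \<open>x1 = Lam t'\<close> by blast
  qed
qed

lemma tilde0_contr_shift:
  assumes "E \<in> fst X" "tilde0 E (Reset (plug G (Shift t))) r'" "pure G"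
    "closed (Reset (plug G (Shift t)))" "closed r'"
  obtains c' where "contr r' c'"
    "tilde0 E (Reset (subst0 t (kont Hole G))) c' \<or> (E, Reset (subst0 t (kont Hole G)), c') \<in> snd X"
proof -
  have re: "relaxed_env E" using env_relaxed[OF \<open>E \<in> fst X\<close>] .
  have "(Reset (plug G (Shift t)), r') \<notin> E"
    using relaxed_env_plug_contr_notin[OF re _ contr_shift[OF \<open>pure G\<close>], of Hole] by simp
  with assms(2) obtain x where x: "r' = Reset x" "tilde0 E (plug G (Shift t)) x"
    by (auto elim: tilde0_ResetE)
  have closed: "closed_ctx 0 G" "closed_at 1 t" "closed x"
    using assms(4,5) x(1) by (auto simp: closed_def)
  from x(2) show ?thesis
  proof (cases rule: tilde0_plug_cases)
    case (inner G' r'')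
    have "pure G'" using ctx_rel_pure[OF inner(2) re \<open>pure G\<close>] .
    from inner(3) show ?thesis
    proof (rule tilde0_ShiftE)
      assume "(Shift t, r'') \<in> E"
      then show ?thesis
        using tilde0_contr_shift_base[OF \<open>E \<in> fst X\<close> \<open>pure G\<close> _ _ inner(2), of Hole t r'']
          that closed inner(1) x(1) by (auto simp: closed_def)
    next
      fix t' assume "r'' = Shift t'" "tilde0 E t t'"
      have "closed_ctx 0 G'" using closed(3) inner(1) by (simp add: closed_def)
      then have "tilde0 E (kont Hole G) (kont Hole G')"
        using kont_Hole_closed closed(1) ctx_rel_plug[OF inner(2) tilde0.var[of E 0]]
        by (auto intro: tilde0.intros)
      then have "tilde0 E (Reset (subst0 t (kont Hole G))) (Reset (subst0 t' (kont Hole G')))"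
        using tilde0_subst0[OF relaxed_env_closed_env[OF re] \<open>tilde0 E t t'\<close>]
          closed_kont_Hole closed(1) \<open>closed_ctx 0 G'\<close> by (blast intro: tilde0.rst)
      then show ?thesis
        using that contr_shift[OF \<open>pure G'\<close>, of t'] x(1) inner(1) \<open>r'' = Shift t'\<close> by blast
    qed
  next
    case (base G1 G2 G1' l)
    then show ?thesis
      using tilde0_contr_shift_base[OF \<open>E \<in> fst X\<close> _ _ _ base(3,4)] \<open>pure G\<close> closed x(1) that
      by (auto simp: closed_def)
  qed
qed

lemma tilde0_contr_reset:
  assumes "E \<in> fst X" "tilde0 E (Reset v) r'" "is_val v"
  obtains c' where "contr r' c'" "tilde0 E v c'"
proof -
  have re: "relaxed_env E" using env_relaxed[OF \<open>E \<in> fst X\<close>] .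
  have "(Reset v, r') \<notin> E"
    using relaxed_env_plug_contr_notin[OF re _ contr_reset[OF \<open>is_val v\<close>], of Hole] by simp
  with assms(2) obtain y where "r' = Reset y" "tilde0 E v y"
    by (auto elim: tilde0_ResetE)
  with tilde0_is_val[OF _ re \<open>is_val v\<close>] show ?thesis
    using that contr_reset by blast
qed

lemma tilde0_contr:
  assumes "E \<in> fst X" "tilde0 E r r'" "contr r c" "closed r" "closed r'"
  obtains c' where "contr r' c'" "tilde0 E c c' \<or> (E, c, c') \<in> snd X"
  using \<open>contr r c\<close>
proof cases
  case (contr_beta v t)
  then show ?thesis using tilde0_contr_beta assms that by blast
next
  case (contr_shift G t)
  then show ?thesis using tilde0_contr_shift assms that by blast
next
  case contr_reset
  then show ?thesis using tilde0_contr_reset assms that by blast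
qed

lemma tilde0_step:
  assumes "E \<in> fst X" "tilde0 E a b" "closed a" "closed b" "step a a'"
  obtains b' where "step b b'" "ctx_closure X E a' b'"
proof -
  have re: "relaxed_env E" using env_relaxed[OF \<open>E \<in> fst X\<close>] .
  from \<open>step a a'\<close> obtain F r c where F: "evctx F" "contr r c" "a = plug F r" "a' = plug F c"
    unfolding step_iff_contr by blast
  from assms(2)[unfolded F(3)] obtain F' r' where F': "b = plug F' r'" "ctx_rel E F F'" "tilde0 E r r'"
    by (cases rule: tilde0_plug_cases)
      (use relaxed_env_plug_contr_notin[OF re _ F(2)] F(1) in auto)
  have "evctx F'" using ctx_rel_evctx[OF F'(2) re F(1)] .
  obtain c' where c': "contr r' c'" "tilde0 E c c' \<or> (E, c, c') \<in> snd X"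
    using tilde0_contr[OF \<open>E \<in> fst X\<close> F'(3) F(2)] assms(3,4) F(3) F'(1)
    by (auto simp: closed_def)
  have step: "step b (plug F' c')"
    using F'(1) c'(1) \<open>evctx F'\<close> unfolding step_iff_contr by blast
  have "closed a'" "closed (plug F' c')"
    using step_closed \<open>step a a'\<close> step assms(3,4) by blast+
  with c'(2) have "ctx_closure X E a' (plug F' c')"
    using F(1,4) F'(2) \<open>evctx F'\<close> \<open>E \<in> fst X\<close>
    unfolding ctx_closure_def by (blast intro: ctx_rel_plug)
  with step show ?thesis using that by blast
qed

text \<open>Once the inner left term of a triple is a value or stuck, its pair joins the environment,
  and a step of the surrounding term becomes a step of terms related by the closure.\<close>
lemma ctx_closure_env_step:
  assumes "insert (u0, u1') E \<in> fst X" "steps u1 u1'" "ctx_rel E F0 F1" "evctx F1"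
    "closed (plug F0 u0)" "closed (plug F1 u1)" "step (plug F0 u0) a'"
  obtains E' b' where "E \<subseteq> E'" "steps (plug F1 u1) b'" "ctx_closure X E' a' b'"
proof -
  let ?E' = "insert (u0, u1') E"
  have steps: "steps (plug F1 u1) (plug F1 u1')" using steps_plug[OF assms(2,4)] .
  have "tilde0 ?E' (plug F0 u0) (plug F1 u1')"
    using ctx_rel_plug[OF ctx_rel_mono[OF assms(3), of ?E']] by (auto intro: tilde0.base)
  from tilde0_step[OF assms(1) this assms(5) steps_closed[OF steps assms(6)] assms(7)]
  obtain b' where "step (plug F1 u1') b'" "ctx_closure X ?E' a' b'" .
  with steps show ?thesis using that by (meson rtranclp.rtrancl_into_rtrancl subset_insertI)
qed

lemma ctx_closure_step:
  assumes "ctx_closure X E a b" "step a a'"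
  obtains E' b' where "E \<subseteq> E'" "steps b b'" "ctx_closure X E' a' b'"
proof -
  have ca: "closed a" and cb: "closed b" using ctx_closure_closed[OF assms(1)] by auto
  from assms(1) show ?thesis
  proof (cases rule: ctx_closureE)
    case tilde
    obtain b' where "step b b'" "ctx_closure X E a' b'"
      using tilde0_step[OF tilde ca cb assms(2)] .
    then show ?thesis using that[of E b'] by (simp add: r_into_rtranclp)
  next
    case (triple F0 F1 u0 u1)
    have absorb: "\<exists>E' b'. E \<subseteq> E' \<and> steps b b' \<and> ctx_closure X E' a' b'"
      if "steps u1 u1'" "insert (u0, u1') E \<in> fst X" for u1'
      using ctx_closure_env_step[OF that(2,1) triple(4,6)] assms(2) ca cb triple(1,2) by metis
    consider "is_val u0" | "stuck u0" | u0' where "step u0 u0'"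
      unfolding stuck_def by blast
    then show ?thesis
    proof cases
      case 1
      then show ?thesis using val_left[OF triple(3)] absorb that by blast
    next
      case 2
      then show ?thesis using stuck_left[OF triple(3)] absorb that by blast
    next
      case (3 u0')
      have "a' = plug F0 u0'"
        using step_deterministic[OF assms(2)] step_plug[OF 3 triple(5)] triple(1) by simp
      obtain u1' where u1': "steps u1 u1'" "(E, u0', u1') \<in> snd X"
        using step_left[OF triple(3) 3] by blast
      have steps: "steps b (plug F1 u1')" using steps_plug[OF u1'(1) triple(6)] triple(2) by simp
      have "ctx_closure X E a' (plug F1 u1')"
        unfolding ctx_closure_def
        using step_closed[OF assms(2) ca] steps_closed[OF steps cb] \<open>a' = plug F0 u0'\<close>
          u1'(2) triple(4-6)
        by blast
      with steps show ?thesis using that by blast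
    qed
  qed
qed

lemma ctx_closure_val:
  assumes "ctx_closure X E a b" "is_val a"
  obtains E' v where "E \<subseteq> E'" "steps b v" "is_val v" "E' \<in> fst X" "tilde E' a v"
proof -
  have ca: "closed a" and cb: "closed b" using ctx_closure_closed[OF assms(1)] by auto
  from assms(1) show ?thesis
  proof (cases rule: ctx_closureE)
    case tilde
    have "is_val b" using tilde0_is_val[OF tilde(2) env_relaxed[OF tilde(1)] assms(2)] .
    then show ?thesis using that tilde ca cb by (auto simp: tilde_def)
  next
    case (triple F0 F1 u0 u1)
    have "F0 = Hole" "is_val u0" using is_val_plug[of F0 u0] assms(2) triple(1) by auto
    then have "F1 = Hole" using triple(4) by (simp add: ctx_rel_Hole_iff)
    obtain v where v: "steps u1 v" "is_val v" "insert (u0, v) E \<in> fst X"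
      using val_left[OF triple(3) \<open>is_val u0\<close>] by blast
    have "closed v" using steps_closed[OF v(1)] triple_relaxed[OF triple(3)] by blast
    then show ?thesis
      using that[of "insert (u0, v) E" v] v triple \<open>F0 = Hole\<close> \<open>F1 = Hole\<close> ca
      by (auto simp: tilde_def intro: tilde0.base)
  qed
qed

lemma ctx_closure_reducts_step:
  assumes "steps p0 a" "steps p1 b" "ctx_closure X E a b" "step p0 p0'"
  obtains E' a' b' where "E \<subseteq> E'" "steps p0' a'" "steps p1 b'" "ctx_closure X E' a' b'"
  using assms(1)
proof (cases rule: converse_rtranclpE)
  case base
  obtain E' b' where "E \<subseteq> E'" "steps b b'" "ctx_closure X E' p0' b'"
    using ctx_closure_step[OF assms(3) assms(4)[unfolded base]] .
  then show ?thesis using that assms(2) by (meson rtranclp.rtrancl_refl rtranclp_trans)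
next
  case (step a0)
  then have "a0 = p0'" using step_deterministic assms(4) by blast
  then show ?thesis using that[of E a b] step assms(2,3) by simp
qed

lemma ctx_closure_reducts_val:
  assumes "steps p0 a" "steps p1 b" "ctx_closure X E a b" "step p0 v0" "is_val v0"
  obtains E' v1 where "E \<subseteq> E'" "steps p1 v1" "is_val v1" "E' \<in> fst X" "tilde E' v0 v1"
proof -
  obtain E' a' b' where h: "E \<subseteq> E'" "steps v0 a'" "steps p1 b'" "ctx_closure X E' a' b'"
    using ctx_closure_reducts_step[OF assms(1-4)] .
  have "a' = v0" using h(2) is_val_no_step[OF assms(5)]
    by (cases rule: converse_rtranclpE) auto
  obtain E'' v1 where "E' \<subseteq> E''" "steps b' v1" "is_val v1" "E'' \<in> fst X" "tilde E'' v0 v1"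
    using ctx_closure_val[OF h(4)[unfolded \<open>a' = v0\<close>] assms(5)] .
  then show ?thesis using that h(1,3) by (meson order_trans rtranclp_trans)
qed

end

section \<open>The program bisimulation\<close>

definition tilde_val_env :: "env \<Rightarrow> env \<Rightarrow> bool" where
  "tilde_val_env E E' \<longleftrightarrow> (\<forall>(a, b) \<in> E'. is_val a \<and> is_val b \<and> tilde E a b)"

lemma tilde_val_env_mono: "tilde_val_env E E' \<Longrightarrow> E \<subseteq> E'' \<Longrightarrow> tilde_val_env E'' E'"
  unfolding tilde_val_env_def using tilde_mono by blast

lemma tilde_val_env_prog_env: "tilde_val_env E E' \<Longrightarrow> prog_env E'"
  unfolding tilde_val_env_def prog_env_def tilde_def by blast

lemma tilde_val_env_tilde0: "tilde_val_env E E' \<Longrightarrow> \<forall>(a, b) \<in> E'. tilde0 E a b"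
  unfolding tilde_val_env_def tilde_def by blast

lemma tilde_val_env_tilde: "tilde_val_env E E' \<Longrightarrow> tilde E' a b \<Longrightarrow> tilde E a b"
  unfolding tilde_def using tilde_val_env_tilde0 tilde0_subset_tilde0 by blast

lemma tilde_val_env_insert:
  "tilde_val_env E E' \<Longrightarrow> is_val v0 \<Longrightarrow> is_val v1 \<Longrightarrow> tilde E v0 v1 \<Longrightarrow>
    tilde_val_env E (insert (v0, v1) E')"
  unfolding tilde_val_env_def by auto

lemma tilde_val_env_converse_iff: "tilde_val_env (E\<inverse>) (E'\<inverse>) \<longleftrightarrow> tilde_val_env E E'"
  unfolding tilde_val_env_def by (auto simp: tilde_converse_iff)

lemma ctx_closure_Reset_plug:
  assumes "ctx_closure X E t0 t1" "ctx_rel E D0 D1" "evctx D0" "evctx D1"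
    "closed_ctx 0 D0" "closed_ctx 0 D1"
  shows "ctx_closure X E (Reset (plug D0 t0)) (Reset (plug D1 t1))"
proof -
  have closed: "closed (Reset (plug D0 t0))" "closed (Reset (plug D1 t1))"
    using ctx_closure_closed[OF assms(1)] assms(5,6) by (auto simp: closed_def)
  from assms(1) show ?thesis
  proof (cases rule: ctx_closureE)
    case (triple F0 F1 u0 u1)
    have "ctx_rel E (CRst (ctx_comp D0 F0)) (CRst (ctx_comp D1 F1))"
      using ctx_rel_ctx_comp[OF assms(2) triple(4)] by (rule ctx_rel.CRst)
    then show ?thesis
      unfolding ctx_closure_def using closed triple assms(3,4)
      by (intro conjI disjI1 exI[of _ "CRst (ctx_comp D0 F0)"] exI[of _ "CRst (ctx_comp D1 F1)"]) auto
  next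
    case tilde
    then show ?thesis
      using closed assms(2) by (auto intro: ctx_closure_tilde0 tilde0.rst ctx_rel_plug)
  qed
qed

text \<open>Programs are related up to reduction: a program step is answered by the empty reduction,
  because the reduction simulating it in X may pass through terms that are not programs.\<close>
definition prog_candidate :: "envrel \<Rightarrow> envrel" where
  "prog_candidate X = ({E'. \<exists>E \<in> fst X. tilde_val_env E E'},
    {(E', a0, b0). closed a0 \<and> closed b0 \<and> (\<exists>E. tilde_val_env E E' \<and> (ctx_closure X E a0 b0 \<or>
        (is_prog a0 \<and> is_prog b0 \<and> (\<exists>a b. steps a0 a \<and> steps b0 b \<and> ctx_closure X E a b))))})"

lemma fst_prog_candidate_iff: "E' \<in> fst (prog_candidate X) \<longleftrightarrow> (\<exists>E \<in> fst X. tilde_val_env E E')"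
  by (simp add: prog_candidate_def)

lemma snd_prog_candidate_iff:
  "(E', a0, b0) \<in> snd (prog_candidate X) \<longleftrightarrow> closed a0 \<and> closed b0 \<and>
    (\<exists>E. tilde_val_env E E' \<and> (ctx_closure X E a0 b0 \<or>
      (is_prog a0 \<and> is_prog b0 \<and> (\<exists>a b. steps a0 a \<and> steps b0 b \<and> ctx_closure X E a b))))"
  by (simp add: prog_candidate_def)

lemma fst_prog_candidate_converse_iff:
  "E' \<in> fst (prog_candidate (converse_envrel X)) \<longleftrightarrow> E'\<inverse> \<in> fst (prog_candidate X)"
  unfolding fst_prog_candidate_iff
  by (metis converse_converse fst_converse_envrel_iff tilde_val_env_converse_iff)

lemma snd_prog_candidate_converse_iff:
  "(E', a0, b0) \<in> snd (prog_candidate (converse_envrel X)) \<longleftrightarrow> (E'\<inverse>, b0, a0) \<in> snd (prog_candidate X)"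
  unfolding snd_prog_candidate_iff
  by (metis converse_converse ctx_closure_converse_iff tilde_val_env_converse_iff)

lemma prog_candidate_Reset_plug:
  assumes "(E', t0, t1) \<in> snd (prog_candidate X)" "\<not> (is_prog t0 \<and> is_prog t1)" "hat E' D0 D1"
  shows "(E', Reset (plug D0 t0), Reset (plug D1 t1)) \<in> snd (prog_candidate X)"
proof -
  obtain E where E: "tilde_val_env E E'" "ctx_closure X E t0 t1"
    using assms(1,2) unfolding snd_prog_candidate_iff by blast
  have D: "ctx_rel E' D0 D1" "evctx D0" "evctx D1" "closed_ctx 0 D0" "closed_ctx 0 D1"
    using assms(3) by (auto simp: hat_iff_ctx_rel)
  have "ctx_rel E D0 D1" using ctx_rel_subset_tilde0[OF D(1) tilde_val_env_tilde0[OF E(1)]] .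
  then have "ctx_closure X E (Reset (plug D0 t0)) (Reset (plug D1 t1))"
    using ctx_closure_Reset_plug[OF E(2)] D by blast
  then show ?thesis unfolding snd_prog_candidate_iff using E(1) ctx_closure_closed by blast
qed

context relaxed_bisimulation
begin

lemma prog_candidate_step_left:
  assumes "(E', p0, p1) \<in> snd (prog_candidate X)" "is_prog p0" "is_prog p1"
    "step p0 p0'" "is_prog p0'"
  shows "(E', p0', p1) \<in> snd (prog_candidate X)"
proof -
  obtain E a b where E: "tilde_val_env E E'" "steps p0 a" "steps p1 b" "ctx_closure X E a b"
    using assms(1) unfolding snd_prog_candidate_iff by blast
  obtain E'' a' b' where "E \<subseteq> E''" "steps p0' a'" "steps p1 b'" "ctx_closure X E'' a' b'"
    using ctx_closure_reducts_step[OF E(2-4) assms(4)] .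
  moreover have "closed p0'" "closed p1"
    using assms(1) step_closed[OF assms(4)] unfolding snd_prog_candidate_iff by auto
  ultimately show ?thesis
    unfolding snd_prog_candidate_iff using tilde_val_env_mono[OF E(1)] assms(3,5) by blast
qed

lemma prog_candidate_val_left:
  assumes "(E', p0, p1) \<in> snd (prog_candidate X)" "is_prog p0" "is_prog p1"
    "step p0 v0" "is_val v0"
  obtains v1 where "steps p1 v1" "is_val v1" "insert (v0, v1) E' \<in> fst (prog_candidate X)"
proof -
  obtain E a b where E: "tilde_val_env E E'" "steps p0 a" "steps p1 b" "ctx_closure X E a b"
    using assms(1) unfolding snd_prog_candidate_iff by blast
  obtain E'' v1 where v1: "E \<subseteq> E''" "steps p1 v1" "is_val v1" "E'' \<in> fst X" "tilde E'' v0 v1"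
    using ctx_closure_reducts_val[OF E(2-4) assms(4,5)] .
  have "tilde_val_env E'' (insert (v0, v1) E')"
    using tilde_val_env_insert[OF tilde_val_env_mono[OF E(1) v1(1)] assms(5) v1(3,5)] .
  then show ?thesis using that v1(2-4) unfolding fst_prog_candidate_iff by blast
qed

interpretation converse: relaxed_bisimulation "converse_envrel X"
  using relaxed_bisim_converse_envrel by unfold_locales

lemma prog_candidate_step_right:
  assumes "(E', p0, p1) \<in> snd (prog_candidate X)" "is_prog p0" "is_prog p1"
    "step p1 p1'" "is_prog p1'"
  shows "(E', p0, p1') \<in> snd (prog_candidate X)"
  using converse.prog_candidate_step_left[of "E'\<inverse>" p1 p0 p1'] assms
  by (simp add: snd_prog_candidate_converse_iff)

lemma prog_candidate_val_right:
  assumes "(E', p0, p1) \<in> snd (prog_candidate X)" "is_prog p0" "is_prog p1"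
    "step p1 v1" "is_val v1"
  obtains v0 where "steps p0 v0" "is_val v0" "insert (v0, v1) E' \<in> fst (prog_candidate X)"
  using converse.prog_candidate_val_left[of "E'\<inverse>" p1 p0 v1] assms that
  by (auto simp: snd_prog_candidate_converse_iff fst_prog_candidate_converse_iff)

lemma prog_candidate_subst0:
  assumes "E' \<in> fst (prog_candidate X)" "(Lam s0, Lam s1) \<in> E'" "is_val v0" "is_val v1"
    "tilde E' v0 v1"
  shows "(E', subst0 s0 v0, subst0 s1 v1) \<in> snd (prog_candidate X)"
proof -
  obtain E where E: "E \<in> fst X" "tilde_val_env E E'"
    using assms(1) unfolding fst_prog_candidate_iff by blast
  have v: "tilde E v0 v1" using tilde_val_env_tilde[OF E(2) assms(5)] .
  have lams: "tilde E (Lam s0) (Lam s1)" using E(2) assms(2) unfolding tilde_val_env_def by blast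
  have closed: "closed (subst0 s0 v0)" "closed (subst0 s1 v1)"
    using lams v by (auto simp: tilde_def intro!: closed_subst0)
  from lams have "tilde0 E (Lam s0) (Lam s1)" by (simp add: tilde_def)
  then have "ctx_closure X E (subst0 s0 v0) (subst0 s1 v1)"
  proof (rule tilde0_LamE)
    assume "(Lam s0, Lam s1) \<in> E"
    then show ?thesis
      using ctx_closure_triple[OF lam_clause[OF E(1)] closed] assms(3,4) v by blast
  next
    fix s1' assume "Lam s1 = Lam s1'" "tilde0 E s0 s1'"
    then have "tilde0 E (subst0 s0 v0) (subst0 s1 v1)"
      using tilde0_subst0[OF relaxed_env_closed_env[OF env_relaxed[OF E(1)]]] v
      by (auto simp: tilde_def)
    then show ?thesis using ctx_closure_tilde0[OF E(1) _ closed] by blast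
  qed
  then show ?thesis unfolding snd_prog_candidate_iff using closed E(2) by blast
qed

lemma prog_bisim_prog_candidate: "prog_bisim (prog_candidate X)"
  unfolding prog_bisim_def insert_is_Un[symmetric]
  apply (intro conjI)
  subgoal using tilde_val_env_prog_env by (auto simp: fst_prog_candidate_iff)
  subgoal using tilde_val_env_prog_env by (auto simp: snd_prog_candidate_iff)
  subgoal using prog_candidate_Reset_plug by blast
  subgoal
    by (intro allI impI conjI; elim conjE)
      (blast intro: rtranclp.rtrancl_refl prog_candidate_step_left prog_candidate_step_right
        elim: prog_candidate_val_left prog_candidate_val_right)+
  subgoal using prog_candidate_subst0 by blast
  done

end

theorem lemma12:
  assumes "closed t0" and "closed t1"
    and "({}, t0, t1) \<in> snd rbisim"
  shows "({}, t0, t1) \<in> snd pbisim"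
proof -
  from assms(3) obtain X where X: "relaxed_bisim X" "({}, t0, t1) \<in> snd X"
    unfolding rbisim_def by auto
  then interpret relaxed_bisimulation X by unfold_locales
  have "({}, t0, t1) \<in> snd (prog_candidate X)"
    unfolding snd_prog_candidate_iff tilde_val_env_def
    using ctx_closure_triple[OF X(2) assms(1,2)] assms(1,2) by blast
  moreover have "snd (prog_candidate X) \<in> {snd Y | Y. prog_bisim Y}"
    using prog_bisim_prog_candidate by blast
  ultimately show ?thesis unfolding pbisim_def by (simp only: snd_conv) blast
qed

end
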